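(* Let $P=\Bbbk[x_1,x_2,x_3]$ with Poisson bracket $\{x_1,x_2\}=0$, $\{x_2,x_3\}=2x_1x_2+x_2^2$, $\{x_3,x_1\}=x_1^2+2x_1x_2$. If $G$ is a nontrivial finite subgroup of $\mathrm{PAut}_{\mathrm{gr}}(P)$ generated by Poisson reflections, then $P^G$ is not isomorphic to $P$ as Poisson algebras.
   Context: $\Bbbk$ is algebraically closed of characteristic $0$; $P$ has the standard grading. $\mathrm{PAut}_{\mathrm{gr}}(P)$ is the group of degree-preserving bijective algebra homomorphisms preserving the bracket. A Poisson reflection is a finite-order $\phi\in\mathrm{PAut}_{\mathrm{gr}}(P)$ such that $\phi|_{P_1}$ has eigenvalues $1,1,\xi$ with $\xi\neq1$ a primitive root of unity. $P^G$ is the subalgebra of $G$-invariants with the restricted bracket. *)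

theory Defs
  imports "HOL-Library.Poly_Mapping" "Jordan_Normal_Form.Char_Poly"
begin

datatype var = X1 | X2 | X3

type_synonym 'k mpoly = "(var \<Rightarrow>\<^sub>0 nat) \<Rightarrow>\<^sub>0 'k"

definition mvar :: "var \<Rightarrow> 'k::comm_ring_1 mpoly" where
  "mvar v = Poly_Mapping.single (Poly_Mapping.single v 1) 1"

definition mconst :: "'k::comm_ring_1 \<Rightarrow> 'k mpoly" where
  "mconst c = Poly_Mapping.single 0 c"

definition pdiff :: "var \<Rightarrow> 'k::comm_ring_1 mpoly \<Rightarrow> 'k mpoly" where
  "pdiff v f = (\<Sum>m\<in>Poly_Mapping.keys f.
      Poly_Mapping.single (m - Poly_Mapping.single v 1)
        (Poly_Mapping.lookup f m * of_nat (Poly_Mapping.lookup m v)))"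

fun gen_br :: "var \<Rightarrow> var \<Rightarrow> 'k::comm_ring_1 mpoly" where
  "gen_br X2 X3 = 2 * mvar X1 * mvar X2 + mvar X2 ^ 2"
| "gen_br X3 X2 = - (2 * mvar X1 * mvar X2 + mvar X2 ^ 2)"
| "gen_br X3 X1 = mvar X1 ^ 2 + 2 * mvar X1 * mvar X2"
| "gen_br X1 X3 = - (mvar X1 ^ 2 + 2 * mvar X1 * mvar X2)"
| "gen_br _ _ = 0"

definition pbr :: "'k::comm_ring_1 mpoly \<Rightarrow> 'k mpoly \<Rightarrow> 'k mpoly" where
  "pbr f g = (\<Sum>u\<in>{X1,X2,X3}. \<Sum>v\<in>{X1,X2,X3}. pdiff u f * pdiff v g * gen_br u v)"

definition homogeneous :: "nat \<Rightarrow> 'k::comm_ring_1 mpoly \<Rightarrow> bool" where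
  "homogeneous d f \<longleftrightarrow> (\<forall>m\<in>Poly_Mapping.keys f. Poly_Mapping.lookup m X1 + Poly_Mapping.lookup m X2 + Poly_Mapping.lookup m X3 = d)"

definition is_k_alg_hom :: "('k::comm_ring_1 mpoly \<Rightarrow> 'k mpoly) \<Rightarrow> bool" where
  "is_k_alg_hom \<phi> \<longleftrightarrow>
     (\<forall>f g. \<phi> (f + g) = \<phi> f + \<phi> g) \<and>
     (\<forall>c f. \<phi> (mconst c * f) = mconst c * \<phi> f) \<and>
     (\<forall>f g. \<phi> (f * g) = \<phi> f * \<phi> g) \<and> \<phi> 1 = 1"

definition PAut_gr :: "('k::comm_ring_1 mpoly \<Rightarrow> 'k mpoly) set" where
  "PAut_gr = {\<phi>. is_k_alg_hom \<phi> \<and> bij \<phi> \<and>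
     (\<forall>d f. homogeneous d f \<longrightarrow> homogeneous d (\<phi> f)) \<and>
     (\<forall>f g. \<phi> (pbr f g) = pbr (\<phi> f) (\<phi> g))}"

fun var_of :: "nat \<Rightarrow> var" where
  "var_of 0 = X1" | "var_of (Suc 0) = X2" | "var_of _ = X3"

text \<open>Matrix of phi restricted to P_1 w.r.t. the basis x1,x2,x3
  (column j = coordinates of phi(x_j)).\<close>
definition lin_mat :: "('k::comm_ring_1 mpoly \<Rightarrow> 'k mpoly) \<Rightarrow> 'k mat" where
  "lin_mat \<phi> = mat 3 3 (\<lambda>(i, j).
      Poly_Mapping.lookup (\<phi> (mvar (var_of j))) (Poly_Mapping.single (var_of i) 1))"

definition poisson_reflection :: "('k::comm_ring_1 mpoly \<Rightarrow> 'k mpoly) \<Rightarrow> bool" where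
  "poisson_reflection \<phi> \<longleftrightarrow> \<phi> \<in> PAut_gr \<and> (\<exists>n>0. \<phi> ^^ n = id) \<and>
     (\<exists>\<xi>. \<xi> \<noteq> 1 \<and> (\<exists>n>0. \<xi> ^ n = 1) \<and>
        char_poly (lin_mat \<phi>) = [:-1, 1:] ^ 2 * [:-\<xi>, 1:])"

inductive_set gen_group :: "('a \<Rightarrow> 'a) set \<Rightarrow> ('a \<Rightarrow> 'a) set" for S where
  gen_id: "id \<in> gen_group S"
| gen_mult: "s \<in> S \<Longrightarrow> g \<in> gen_group S \<Longrightarrow> s \<circ> g \<in> gen_group S"
| gen_inv: "s \<in> S \<Longrightarrow> g \<in> gen_group S \<Longrightarrow> inv_into UNIV s \<circ> g \<in> gen_group S"

definition invariants :: "('k::comm_ring_1 mpoly \<Rightarrow> 'k mpoly) set \<Rightarrow> 'k mpoly set" where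
  "invariants G = {f. \<forall>g\<in>G. g f = f}"

definition poisson_iso_to_subalg :: "'k::comm_ring_1 mpoly set \<Rightarrow> bool" where
  "poisson_iso_to_subalg A \<longleftrightarrow> (\<exists>\<psi>. bij_betw \<psi> UNIV A \<and> is_k_alg_hom \<psi> \<and>
      (\<forall>f g. \<psi> (pbr f g) = pbr (\<psi> f) (\<psi> g)))"

definition alg_closed :: "'k::field itself \<Rightarrow> bool" where
  "alg_closed _ \<longleftrightarrow> (\<forall>p::'k poly. Polynomial.degree p > 0 \<longrightarrow> (\<exists>x. poly p x = 0))"

end

theory Submission
  imports Defs
begin

text \<open>
  The bracket is the Jacobian bracket of the potential \<open>x1 x2 (x1 + x2)\<close>: \<open>{x2, x3}\<close> and
  \<open>{x3, x1}\<close> are its two partial derivatives and \<open>{x1, x2} = 0\<close>. Comparing coefficients of the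
  brackets of the images of \<open>x1, x2, x3\<close> with the characteristic polynomial shows that a Poisson
  reflection maps \<open>x3\<close> to \<open>p x1 + q x2 + x3\<close> and acts on the span of \<open>x1, x2\<close> as one of three
  reflections, each interchanging two of the lines \<open>x1 = 0\<close>, \<open>x2 = 0\<close>, \<open>x1 + x2 = 0\<close>. So the
  orbit sum \<open>F\<close> of \<open>x3\<close> is an invariant linear form with \<open>x3\<close>-coefficient \<open>|G|\<close>, the invariant
  linear forms are combinations of \<open>F\<close> and at most one form \<open>w\<close> in \<open>x1, x2\<close>, and
  \<open>x1\<^sup>2 + x1 x2 + x2\<^sup>2\<close> is invariant.

  All brackets of \<open>P\<close> lie in \<open>(x1, x2)\<^sup>2\<close>, and a Poisson isomorphism \<open>\<psi> : P \<rightarrow> P\<^sup>G\<close> sends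
  \<open>x1, x2\<close> to elements without constant term, because the two quadrics \<open>{x2, x3}\<close>, \<open>{x3, x1}\<close>
  have no common nonzero root. So every bracket of invariants would be a sum of products of
  invariants without constant term. In degree 2 this fails for \<open>{F, w}\<close>; if there is no \<open>w\<close>,
  the degree-3 part of such a sum is divisible by \<open>F\<close>, which fails for
  \<open>{F, x1\<^sup>2 + x1 x2 + x2\<^sup>2}\<close>.
\<close>

section \<open>Monomials, homogeneous components and low-degree forms\<close>

declare One_nat_def [simp del]

abbreviation mcoeff :: "'k::comm_ring_1 mpoly \<Rightarrow> (var \<Rightarrow>\<^sub>0 nat) \<Rightarrow> 'k" where
  "mcoeff f m \<equiv> Poly_Mapping.lookup f m"

definition xpow :: "nat \<Rightarrow> nat \<Rightarrow> nat \<Rightarrow> (var \<Rightarrow>\<^sub>0 nat)" where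
  "xpow a b c = Poly_Mapping.single X1 a + Poly_Mapping.single X2 b + Poly_Mapping.single X3 c"

definition mdeg :: "(var \<Rightarrow>\<^sub>0 nat) \<Rightarrow> nat" where
  "mdeg m = Poly_Mapping.lookup m X1 + Poly_Mapping.lookup m X2 + Poly_Mapping.lookup m X3"

lemma lookup_xpow [simp]:
  "Poly_Mapping.lookup (xpow a b c) X1 = a"
  "Poly_Mapping.lookup (xpow a b c) X2 = b"
  "Poly_Mapping.lookup (xpow a b c) X3 = c"
  by (simp_all add: xpow_def lookup_add lookup_single)

lemma xpow_eq_iff [simp]: "xpow a b c = xpow a' b' c' \<longleftrightarrow> a = a' \<and> b = b' \<and> c = c'"
  by (metis lookup_xpow)

lemma xpow_lookup: "xpow (Poly_Mapping.lookup m X1) (Poly_Mapping.lookup m X2) (Poly_Mapping.lookup m X3) = m"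
  by (rule poly_mapping_eqI) (case_tac k; simp)

lemma xpow_add [simp]: "xpow a b c + xpow a' b' c' = xpow (a + a') (b + b') (c + c')"
  by (rule poly_mapping_eqI) (case_tac k; simp add: lookup_add)

lemma xpow_diff [simp]: "xpow a b c - xpow a' b' c' = xpow (a - a') (b - b') (c - c')"
  by (rule poly_mapping_eqI) (case_tac k; simp add: lookup_minus)

lemma xpow_0: "xpow 0 0 0 = 0"
  by (rule poly_mapping_eqI) (case_tac k; simp)

lemma single_var_eq_xpow:
  "Poly_Mapping.single X1 1 = xpow 1 0 0"
  "Poly_Mapping.single X2 1 = xpow 0 1 0"
  "Poly_Mapping.single X3 1 = xpow 0 0 1"
  by (rule poly_mapping_eqI; case_tac k; simp add: lookup_single)+

lemma mdeg_xpow [simp]: "mdeg (xpow a b c) = a + b + c"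
  by (simp add: mdeg_def)

lemma mdeg_add [simp]: "mdeg (m + n) = mdeg m + mdeg n"
  by (simp add: mdeg_def lookup_add)

lemma mdeg_eq_0_iff: "mdeg m = 0 \<longleftrightarrow> m = 0"
  by (metis add_is_0 mdeg_xpow xpow_0 xpow_lookup)

lemma homogeneous_iff_mdeg: "homogeneous d f \<longleftrightarrow> (\<forall>m\<in>Poly_Mapping.keys f. mdeg m = d)"
  by (simp add: homogeneous_def mdeg_def)

lemma homogeneous_coeff: "homogeneous d f \<Longrightarrow> mdeg m \<noteq> d \<Longrightarrow> mcoeff f m = 0"
  by (auto simp: homogeneous_iff_mdeg in_keys_iff)

lemma homogeneous_0: "homogeneous d 0"
  by (simp add: homogeneous_def)

lemma homogeneous_add: "homogeneous d f \<Longrightarrow> homogeneous d g \<Longrightarrow> homogeneous d (f + g)"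
  by (auto simp: homogeneous_iff_mdeg dest!: set_mp[OF keys_add])

lemma homogeneous_sum: "(\<And>x. x \<in> S \<Longrightarrow> homogeneous d (h x)) \<Longrightarrow> homogeneous d (sum h S)"
  by (induction S rule: infinite_finite_induct) (simp_all add: homogeneous_0 homogeneous_add)

lemma homogeneous_mult: "homogeneous i f \<Longrightarrow> homogeneous j g \<Longrightarrow> homogeneous (i + j) (f * g)"
  using keys_mult[of f g] by (fastforce simp: homogeneous_iff_mdeg)

definition hcomp :: "nat \<Rightarrow> 'k::comm_ring_1 mpoly \<Rightarrow> 'k mpoly" where
  "hcomp d = Poly_Mapping.mapp (\<lambda>m c. if mdeg m = d then c else 0)"

lemma coeff_hcomp: "mcoeff (hcomp d f) m = (if mdeg m = d then mcoeff f m else 0)"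
  by (auto simp: hcomp_def lookup_mapp in_keys_iff when_def)

lemma homogeneous_hcomp: "homogeneous d (hcomp d f)"
  by (auto simp: homogeneous_iff_mdeg in_keys_iff coeff_hcomp split: if_splits)

lemma hcomp_add: "hcomp d (f + g) = hcomp d f + hcomp d g"
  by (rule poly_mapping_eqI) (simp add: coeff_hcomp lookup_add)

lemma hcomp_0 [simp]: "hcomp d 0 = 0"
  by (rule poly_mapping_eqI) (simp add: coeff_hcomp)

lemma hcomp_sum: "hcomp d (sum h S) = (\<Sum>x\<in>S. hcomp d (h x))"
  by (induction S rule: infinite_finite_induct) (simp_all add: hcomp_add)

lemma hcomp_homogeneous: "homogeneous i f \<Longrightarrow> hcomp d f = (if i = d then f else 0)"
  by (rule poly_mapping_eqI) (auto simp: coeff_hcomp homogeneous_coeff)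

lemma sum_hcomp_eq:
  assumes "\<forall>m\<in>Poly_Mapping.keys f. mdeg m \<le> n"
  shows "(\<Sum>i\<le>n. hcomp i f) = f"
proof (rule poly_mapping_eqI)
  fix m
  have "mcoeff (\<Sum>i\<le>n. hcomp i f) m = (if mdeg m \<le> n then mcoeff f m else 0)"
    by (simp add: lookup_sum coeff_hcomp sum.delta')
  then show "mcoeff (\<Sum>i\<le>n. hcomp i f) m = mcoeff f m"
    using assms by (auto simp: in_keys_iff)
qed

lemma mdeg_bounded: "\<exists>n. \<forall>m\<in>Poly_Mapping.keys f. mdeg m \<le> n"
  by (metis finite_keys finite_imageI finite_nat_set_iff_bounded_le imageI)

lemma hcomp_mult: "hcomp n (f * g) = (\<Sum>i\<le>n. hcomp i f * hcomp (n - i) g)"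
proof -
  obtain Nf Ng where Nfg: "\<forall>m\<in>Poly_Mapping.keys f. mdeg m \<le> Nf" "\<forall>m\<in>Poly_Mapping.keys g. mdeg m \<le> Ng"
    using mdeg_bounded by blast
  define N where "N = max (max Nf Ng) n"
  have N: "\<forall>m\<in>Poly_Mapping.keys f. mdeg m \<le> N" "\<forall>m\<in>Poly_Mapping.keys g. mdeg m \<le> N" "n \<le> N"
    using Nfg by (auto simp: N_def le_max_iff_disj)
  have "f * g = (\<Sum>i\<le>N. hcomp i f) * (\<Sum>j\<le>N. hcomp j g)"
    using N by (simp only: sum_hcomp_eq)
  also have "\<dots> = (\<Sum>i\<le>N. \<Sum>j\<le>N. hcomp i f * hcomp j g)"
    by (rule sum_product)
  finally have "hcomp n (f * g) = (\<Sum>i\<le>N. \<Sum>j\<le>N. if i + j = n then hcomp i f * hcomp j g else 0)"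
    by (simp add: hcomp_sum hcomp_homogeneous[OF homogeneous_mult[OF homogeneous_hcomp homogeneous_hcomp]])
  also have "\<dots> = (\<Sum>i\<le>N. if i \<le> n then hcomp i f * hcomp (n - i) g else 0)"
  proof (rule sum.cong)
    fix i
    have "(\<Sum>j\<le>N. if i + j = n then hcomp i f * hcomp j g else 0) =
        (\<Sum>j\<le>N. if j = n - i then (if i \<le> n then hcomp i f * hcomp j g else 0) else 0)"
      by (rule sum.cong) auto
    then show "(\<Sum>j\<le>N. if i + j = n then hcomp i f * hcomp j g else 0) =
        (if i \<le> n then hcomp i f * hcomp (n - i) g else 0)"
      using N(3) by (simp only: sum.delta') auto
  qed simp
  also have "\<dots> = (\<Sum>i\<le>n. hcomp i f * hcomp (n - i) g)"
    using N(3) by (intro sum.mono_neutral_cong_right) auto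
  finally show ?thesis .
qed

lemma mconst_add: "mconst (a + b) = mconst a + mconst b"
  by (simp add: mconst_def single_add)

lemma mconst_mult: "mconst (a * b) = mconst a * mconst b"
  by (simp add: mconst_def mult_single)

lemma mconst_diff: "mconst (a - b) = mconst a - mconst b"
  by (simp add: mconst_def single_diff)

lemma mconst_uminus: "mconst (- a) = - mconst a"
  by (simp add: mconst_def single_uminus)

lemma mconst_0 [simp]: "mconst 0 = 0"
  by (simp add: mconst_def)

lemma mconst_1 [simp]: "mconst 1 = 1"
  by (simp add: mconst_def)

lemma mconst_numeral [simp]: "mconst (numeral n) = numeral n"
  by (simp add: mconst_def)

lemma mconst_eq_iff [simp]: "mconst a = mconst b \<longleftrightarrow> a = b"
  by (metis lookup_single_eq mconst_def)

lemma mconst_eq_0_iff [simp]: "mconst a = 0 \<longleftrightarrow> a = 0"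
  by (metis mconst_0 mconst_eq_iff)

lemmas mconst_simps = mconst_add mconst_mult mconst_diff mconst_uminus

lemma coeff_single_mult_xpow:
  fixes f :: "'k::comm_ring_1 mpoly"
  shows "mcoeff (Poly_Mapping.single (xpow a b c) k * f) (xpow a' b' c') =
    (if a \<le> a' \<and> b \<le> b' \<and> c \<le> c' then k * mcoeff f (xpow (a' - a) (b' - b) (c' - c)) else 0)"
proof (cases "a \<le> a' \<and> b \<le> b' \<and> c \<le> c'")
  case True
  then have "xpow a' b' c' = xpow a b c + q \<longleftrightarrow> q = xpow (a' - a) (b' - b) (c' - c)" for q
    by (subst (1 2) xpow_lookup[of q, symmetric]) auto
  with True show ?thesis
    by (simp add: lookup_mult lookup_single when_mult)
next
  case False
  then have "xpow a' b' c' \<noteq> xpow a b c + q" for q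
    by (subst xpow_lookup[of q, symmetric]) auto
  with False show ?thesis
    by (auto simp: lookup_mult lookup_single when_mult)
qed

lemma mvar_eq_single:
  "mvar X1 = Poly_Mapping.single (xpow 1 0 0) 1"
  "mvar X2 = Poly_Mapping.single (xpow 0 1 0) 1"
  "mvar X3 = Poly_Mapping.single (xpow 0 0 1) 1"
  by (simp_all add: mvar_def single_var_eq_xpow)

lemma coeff_mconst_mult: "mcoeff (mconst k * f) m = k * mcoeff f m"
  using coeff_single_mult_xpow[of 0 0 0 k f "Poly_Mapping.lookup m X1" "Poly_Mapping.lookup m X2"
      "Poly_Mapping.lookup m X3"]
  by (simp add: mconst_def xpow_0 xpow_lookup)

definition lin :: "'k::comm_ring_1 \<Rightarrow> 'k \<Rightarrow> 'k \<Rightarrow> 'k mpoly" where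
  "lin a b c = mconst a * mvar X1 + mconst b * mvar X2 + mconst c * mvar X3"

lemma lin_eq_single: "lin a b c = Poly_Mapping.single (xpow 1 0 0) a +
    Poly_Mapping.single (xpow 0 1 0) b + Poly_Mapping.single (xpow 0 0 1) c"
  by (simp add: lin_def mconst_def mvar_eq_single mult_single xpow_0)

lemma coeff_lin [simp]:
  "mcoeff (lin a b c) (xpow 1 0 0) = a"
  "mcoeff (lin a b c) (xpow 0 1 0) = b"
  "mcoeff (lin a b c) (xpow 0 0 1) = c"
  by (simp_all add: lin_eq_single lookup_add lookup_single)

lemma lin_eq_iff [simp]: "lin a b c = lin a' b' c' \<longleftrightarrow> a = a' \<and> b = b' \<and> c = c'"
  by (metis coeff_lin)

lemma mvar_eq_lin: "mvar X1 = lin 1 0 0" "mvar X2 = lin 0 1 0" "mvar X3 = lin 0 0 1"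
  by (simp_all add: lin_def)

lemma lin_add [simp]: "lin a b c + lin a' b' c' = lin (a + a') (b + b') (c + c')"
  by (simp add: lin_def mconst_simps algebra_simps)

lemma lin_diff [simp]: "lin a b c - lin a' b' c' = lin (a - a') (b - b') (c - c')"
  by (simp add: lin_def mconst_simps algebra_simps)

lemma mconst_mult_lin [simp]: "mconst k * lin a b c = lin (k * a) (k * b) (k * c)"
  by (simp add: lin_def mconst_simps algebra_simps)

lemma numeral_mult_lin [simp]: "numeral n * lin a b c = lin (numeral n * a) (numeral n * b) (numeral n * c)"
  using mconst_mult_lin[of "numeral n"] by simp

lemma homogeneous_lin: "homogeneous 1 (lin a b c)"
  by (auto simp: lin_eq_single homogeneous_iff_mdeg split: if_splits dest!: set_mp[OF keys_add])

lemma homogeneous_1_eq_lin: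
  assumes "homogeneous 1 f"
  shows "f = lin (mcoeff f (xpow 1 0 0)) (mcoeff f (xpow 0 1 0)) (mcoeff f (xpow 0 0 1))"
proof (rule poly_mapping_eqI)
  fix m
  obtain a b c where m: "m = xpow a b c"
    using xpow_lookup by metis
  show "mcoeff f m = mcoeff (lin (mcoeff f (xpow 1 0 0)) (mcoeff f (xpow 0 1 0)) (mcoeff f (xpow 0 0 1))) m"
  proof (cases "a + b + c = 1")
    case True
    then have "(a, b, c) \<in> {(1, 0, 0), (0, 1, 0), (0, 0, 1)}"
      by auto
    then show ?thesis
      by (auto simp: m)
  next
    case False
    then show ?thesis
      by (simp add: m homogeneous_coeff[OF assms] homogeneous_coeff[OF homogeneous_lin])
  qed
qed

definition quad :: "'k::comm_ring_1 \<Rightarrow> 'k \<Rightarrow> 'k \<Rightarrow> 'k \<Rightarrow> 'k \<Rightarrow> 'k \<Rightarrow> 'k mpoly" where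
  "quad a11 a12 a22 a13 a23 a33 =
     Poly_Mapping.single (xpow 2 0 0) a11 + Poly_Mapping.single (xpow 1 1 0) a12 +
     Poly_Mapping.single (xpow 0 2 0) a22 + Poly_Mapping.single (xpow 1 0 1) a13 +
     Poly_Mapping.single (xpow 0 1 1) a23 + Poly_Mapping.single (xpow 0 0 2) a33"

lemma coeff_quad [simp]:
  "mcoeff (quad a11 a12 a22 a13 a23 a33) (xpow 2 0 0) = a11"
  "mcoeff (quad a11 a12 a22 a13 a23 a33) (xpow 1 1 0) = a12"
  "mcoeff (quad a11 a12 a22 a13 a23 a33) (xpow 0 2 0) = a22"
  "mcoeff (quad a11 a12 a22 a13 a23 a33) (xpow 1 0 1) = a13"
  "mcoeff (quad a11 a12 a22 a13 a23 a33) (xpow 0 1 1) = a23"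
  "mcoeff (quad a11 a12 a22 a13 a23 a33) (xpow 0 0 2) = a33"
  by (simp_all add: quad_def lookup_add lookup_single)

lemma quad_eq_iff [simp]:
  "quad a11 a12 a22 a13 a23 a33 = quad b11 b12 b22 b13 b23 b33 \<longleftrightarrow>
     a11 = b11 \<and> a12 = b12 \<and> a22 = b22 \<and> a13 = b13 \<and> a23 = b23 \<and> a33 = b33"
  by (metis coeff_quad)

lemma quad_0: "quad 0 0 0 0 0 0 = 0"
  by (simp add: quad_def)

lemma quad_add [simp]:
  "quad a11 a12 a22 a13 a23 a33 + quad b11 b12 b22 b13 b23 b33 =
     quad (a11 + b11) (a12 + b12) (a22 + b22) (a13 + b13) (a23 + b23) (a33 + b33)"
  by (simp add: quad_def single_add algebra_simps)

lemma mconst_mult_quad [simp]: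
  "mconst k * quad a11 a12 a22 a13 a23 a33 =
     quad (k * a11) (k * a12) (k * a22) (k * a13) (k * a23) (k * a33)"
  by (simp add: quad_def mconst_def mult_single distrib_left xpow_0)

lemma homogeneous_quad: "homogeneous 2 (quad a11 a12 a22 a13 a23 a33)"
  by (auto simp: quad_def homogeneous_iff_mdeg split: if_splits dest!: set_mp[OF keys_add])

lemma coeff_lin_mult:
  "mcoeff (lin a b c * f) (xpow i j k) =
     (if 0 < i then a * mcoeff f (xpow (i - 1) j k) else 0) +
     (if 0 < j then b * mcoeff f (xpow i (j - 1) k) else 0) +
     (if 0 < k then c * mcoeff f (xpow i j (k - 1)) else 0)"
  by (simp add: lin_eq_single distrib_right lookup_add coeff_single_mult_xpow Suc_le_eq)

lemma lin_mult_lin: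
  "lin a b c * lin a' b' c' =
     quad (a * a') (a * b' + b * a') (b * b') (a * c' + c * a') (b * c' + c * b') (c * c')"
  by (simp add: lin_eq_single quad_def mult_single algebra_simps single_add)

section \<open>The Poisson bracket\<close>

lemma pdiff_eq_sum_superset:
  fixes f :: "'k::comm_ring_1 mpoly"
  assumes "finite S" "Poly_Mapping.keys f \<subseteq> S"
  shows "pdiff v f = (\<Sum>m\<in>S. Poly_Mapping.single (m - Poly_Mapping.single v 1)
      (mcoeff f m * of_nat (Poly_Mapping.lookup m v)))"
  unfolding pdiff_def by (rule sum.mono_neutral_left) (use assms in \<open>auto simp: in_keys_iff\<close>)

lemma pdiff_add: "pdiff v (f + g) = pdiff v f + pdiff v (g :: 'k::comm_ring_1 mpoly)"
proof -
  let ?S = "Poly_Mapping.keys f \<union> Poly_Mapping.keys g"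
  have "finite ?S" "Poly_Mapping.keys (f + g) \<subseteq> ?S"
    by (auto simp: keys_add)
  then show ?thesis
    by (simp add: pdiff_eq_sum_superset[of ?S] lookup_add distrib_right single_add sum.distrib)
qed

lemma pdiff_single:
  "pdiff v (Poly_Mapping.single m (c :: 'k::comm_ring_1)) =
     Poly_Mapping.single (m - Poly_Mapping.single v 1) (c * of_nat (Poly_Mapping.lookup m v))"
  by (cases "c = 0") (simp_all add: pdiff_def)

lemma pdiff_lin [simp]:
  "pdiff X1 (lin a b c) = mconst a"
  "pdiff X2 (lin a b c) = mconst b"
  "pdiff X3 (lin a b c) = mconst c"
  by (simp_all add: lin_eq_single pdiff_add pdiff_single single_var_eq_xpow mconst_def xpow_0)

lemma pdiff_mvar: "pdiff u (mvar v) = (if u = v then 1 else 0)"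
  by (cases u; cases v) (simp_all add: mvar_eq_lin)

definition qform :: "'k::comm_ring_1 mpoly" where
  "qform = mvar X1 * mvar X1 + mvar X1 * mvar X2 + mvar X2 * mvar X2"

lemma qform_eq_quad: "qform = quad 1 1 1 0 0 0"
  by (simp add: qform_def mvar_eq_lin lin_mult_lin)

lemma pdiff_qform:
  "pdiff X1 qform = lin 2 1 0"
  "pdiff X2 qform = lin 1 2 0"
  "pdiff X3 qform = 0"
  by (simp_all add: qform_eq_quad quad_def lin_eq_single pdiff_add pdiff_single single_var_eq_xpow
      flip: One_nat_def)

lemma gen_br_eq_quad:
  "2 * mvar X1 * mvar X2 + mvar X2 ^ 2 = quad 0 2 1 0 0 0"
  "mvar X1 ^ 2 + 2 * mvar X1 * mvar X2 = quad 1 2 0 0 0 0"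
  by (simp_all add: mvar_eq_lin lin_mult_lin power2_eq_square)

lemma pbr_eq:
  "pbr f g = (pdiff X2 f * pdiff X3 g - pdiff X3 f * pdiff X2 g) * (2 * mvar X1 * mvar X2 + mvar X2 ^ 2)
     + (pdiff X3 f * pdiff X1 g - pdiff X1 f * pdiff X3 g) * (mvar X1 ^ 2 + 2 * mvar X1 * mvar X2)"
  by (simp add: pbr_def algebra_simps)

lemma pbr_lin_lin:
  "pbr (lin a1 a2 a3) (lin b1 b2 b3) =
     quad (a3 * b1 - a1 * b3) (2 * (a2 * b3 - a3 * b2) + 2 * (a3 * b1 - a1 * b3)) (a2 * b3 - a3 * b2) 0 0 0"
  by (simp add: pbr_eq mvar_eq_lin lin_mult_lin power2_eq_square flip: mconst_simps)

lemma pbr_mvar: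
  "pbr (mvar X1) (mvar X2) = 0"
  "pbr (mvar X2) (mvar X3) = 2 * mvar X1 * mvar X2 + mvar X2 ^ 2"
  "pbr (mvar X3) (mvar X1) = mvar X1 ^ 2 + 2 * mvar X1 * mvar X2"
  by (simp_all add: pbr_def pdiff_mvar)

lemma coeff_pbr_lin_qform:
  "mcoeff (pbr (lin a b c) qform) (xpow 0 0 3) = 0"
  "mcoeff (pbr (lin a b c) qform) (xpow 1 0 2) = 0"
  "mcoeff (pbr (lin a b c) qform) (xpow 2 0 1) = 0"
  "mcoeff (pbr (lin a b c) qform) (xpow 3 0 0) = 2 * c"
  by (simp_all add: pbr_eq pdiff_qform gen_br_eq_quad lookup_add lookup_minus coeff_mconst_mult
      coeff_lin_mult flip: One_nat_def)

lemma hcomp_0_eq_mconst: "hcomp 0 f = mconst (mcoeff f 0)"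
  by (rule poly_mapping_eqI) (auto simp: coeff_hcomp mconst_def lookup_single mdeg_eq_0_iff when_def)

lemma hcomp_0_mult: "hcomp 0 (f * g) = hcomp 0 f * hcomp 0 g"
  by (simp add: hcomp_mult)

lemma hcomp_0_pbr: "hcomp 0 (pbr f g) = 0"
  by (simp add: pbr_eq gen_br_eq_quad hcomp_add hcomp_0_mult hcomp_homogeneous[OF homogeneous_quad])

context
  fixes \<phi> :: "'k::comm_ring_1 mpoly \<Rightarrow> 'k mpoly"
  assumes hom: "is_k_alg_hom \<phi>"
begin

lemma k_alg_hom_add: "\<phi> (f + g) = \<phi> f + \<phi> g"
  using hom unfolding is_k_alg_hom_def by blast

lemma k_alg_hom_mult: "\<phi> (f * g) = \<phi> f * \<phi> g"
  using hom unfolding is_k_alg_hom_def by blast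

lemma k_alg_hom_mconst_mult: "\<phi> (mconst c * f) = mconst c * \<phi> f"
  using hom unfolding is_k_alg_hom_def by blast

lemma k_alg_hom_1: "\<phi> 1 = 1"
  using hom unfolding is_k_alg_hom_def by blast

lemma k_alg_hom_mconst: "\<phi> (mconst c) = mconst c"
  using k_alg_hom_mconst_mult[of c 1] by (simp add: k_alg_hom_1)

lemma k_alg_hom_numeral: "\<phi> (numeral n) = numeral n"
  using k_alg_hom_mconst[of "numeral n"] by simp

lemma k_alg_hom_0: "\<phi> 0 = 0"
  using k_alg_hom_mconst[of 0] by simp

lemma k_alg_hom_diff: "\<phi> (f - g) = \<phi> f - \<phi> g"
  using k_alg_hom_add[of "f - g" g] by simp

lemma k_alg_hom_power: "\<phi> (f ^ n) = \<phi> f ^ n"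
  by (induction n) (simp_all add: k_alg_hom_1 k_alg_hom_mult)

lemma k_alg_hom_sum: "\<phi> (sum h S) = (\<Sum>x\<in>S. \<phi> (h x))"
  by (induction S rule: infinite_finite_induct) (simp_all add: k_alg_hom_0 k_alg_hom_add)

lemma k_alg_hom_lin: "\<phi> (lin a b c) = mconst a * \<phi> (mvar X1) + mconst b * \<phi> (mvar X2) + mconst c * \<phi> (mvar X3)"
  by (simp add: lin_def k_alg_hom_add k_alg_hom_mconst_mult)

lemmas k_alg_hom_simps = k_alg_hom_add k_alg_hom_mult k_alg_hom_numeral k_alg_hom_diff k_alg_hom_power

end

lemma PAut_gr_hcomp:
  assumes "\<phi> \<in> PAut_gr"
  shows "\<phi> (hcomp d f) = hcomp d (\<phi> f)"
proof -
  have hom: "is_k_alg_hom \<phi>"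
    using assms by (simp add: PAut_gr_def)
  obtain n0 where "\<forall>m\<in>Poly_Mapping.keys f. mdeg m \<le> n0"
    using mdeg_bounded by blast
  define n where "n = max n0 d"
  then have n: "\<forall>m\<in>Poly_Mapping.keys f. mdeg m \<le> n" "d \<le> n"
    using \<open>\<forall>m\<in>Poly_Mapping.keys f. mdeg m \<le> n0\<close> by (auto simp: le_max_iff_disj)
  have "hcomp d (\<phi> f) = hcomp d (\<phi> (\<Sum>i\<le>n. hcomp i f))"
    by (simp only: sum_hcomp_eq[OF n(1)])
  also have "\<dots> = (\<Sum>i\<le>n. hcomp d (\<phi> (hcomp i f)))"
    by (simp add: k_alg_hom_sum[OF hom] hcomp_sum)
  also have "\<dots> = (\<Sum>i\<le>n. if i = d then \<phi> (hcomp i f) else 0)"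
    using assms by (intro sum.cong) (auto simp: PAut_gr_def homogeneous_hcomp hcomp_homogeneous)
  also have "\<dots> = \<phi> (hcomp d f)"
    using n(2) by simp
  finally show ?thesis ..
qed

section \<open>Classification of Poisson reflections\<close>

lemma det_2:
  assumes "A \<in> carrier_mat 2 2"
  shows "det A = A $$ (0, 0) * A $$ (1, 1) - A $$ (0, 1) * A $$ (1, 0)"
  using assms
  apply (subst laplace_expansion_row[of _ 2 0])
    apply (auto simp: cofactor_def numeral_2_eq_2 lessThan_Suc One_nat_def)
  apply (subst det_single, auto simp: mat_delete_def insert_index_def One_nat_def)+
  done

lemma det_3:
  assumes "A \<in> carrier_mat 3 3"
  shows "det A = A $$ (0, 0) * A $$ (1, 1) * A $$ (2, 2) - A $$ (0, 0) * A $$ (1, 2) * A $$ (2, 1)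
    - A $$ (0, 1) * A $$ (1, 0) * A $$ (2, 2) + A $$ (0, 1) * A $$ (1, 2) * A $$ (2, 0)
    + A $$ (0, 2) * A $$ (1, 0) * A $$ (2, 1) - A $$ (0, 2) * A $$ (1, 1) * A $$ (2, 0)"
  using assms
  apply (subst laplace_expansion_row[of _ 3 0])
    apply (auto simp: cofactor_def numeral_3_eq_3 lessThan_Suc One_nat_def)
  apply (subst det_2, auto simp: mat_delete_def insert_index_def numeral_2_eq_2 algebra_simps One_nat_def)+
  done

lemma char_poly_3:
  fixes A :: "'a::comm_ring_1 mat"
  assumes "A \<in> carrier_mat 3 3"
  shows "char_poly A =
    [: -(A $$ (0, 0) * A $$ (1, 1) * A $$ (2, 2) - A $$ (0, 0) * A $$ (1, 2) * A $$ (2, 1)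
        - A $$ (0, 1) * A $$ (1, 0) * A $$ (2, 2) + A $$ (0, 1) * A $$ (1, 2) * A $$ (2, 0)
        + A $$ (0, 2) * A $$ (1, 0) * A $$ (2, 1) - A $$ (0, 2) * A $$ (1, 1) * A $$ (2, 0)),
       A $$ (0, 0) * A $$ (1, 1) - A $$ (0, 1) * A $$ (1, 0) + A $$ (0, 0) * A $$ (2, 2)
        - A $$ (0, 2) * A $$ (2, 0) + A $$ (1, 1) * A $$ (2, 2) - A $$ (1, 2) * A $$ (2, 1),
       -(A $$ (0, 0) + A $$ (1, 1) + A $$ (2, 2)), 1:]"
proof -
  have "char_poly A = det (char_poly_matrix A)"
    by (simp add: char_poly_def)
  also have "\<dots> = [:-A $$ (0, 0), 1:] * [:-A $$ (1, 1), 1:] * [:-A $$ (2, 2), 1:]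
      - [:-A $$ (0, 0), 1:] * [:-A $$ (1, 2):] * [:-A $$ (2, 1):]
      - [:-A $$ (0, 1):] * [:-A $$ (1, 0):] * [:-A $$ (2, 2), 1:]
      + [:-A $$ (0, 1):] * [:-A $$ (1, 2):] * [:-A $$ (2, 0):]
      + [:-A $$ (0, 2):] * [:-A $$ (1, 0):] * [:-A $$ (2, 1):]
      - [:-A $$ (0, 2):] * [:-A $$ (1, 1), 1:] * [:-A $$ (2, 0):]"
    using assms by (subst det_3) (auto simp: char_poly_matrix_def One_nat_def)
  finally show ?thesis
    by (simp add: algebra_simps)
qed

lemma var_of_1: "var_of 1 = X2"
  by (simp add: One_nat_def)

lemma char_poly_lin_mat:
  assumes "\<phi> (mvar X1) = lin a b g1" "\<phi> (mvar X2) = lin c d g2" "\<phi> (mvar X3) = lin p q e"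
  shows "char_poly (lin_mat \<phi>) =
    [: -(a * d * e - a * q * g2 - c * b * e + c * q * g1 + p * b * g2 - p * d * g1),
       a * d - c * b + a * e - p * g1 + d * e - q * g2, -(a + d + e), 1:]"
proof -
  have "lin_mat \<phi> \<in> carrier_mat 3 3"
    by (simp add: lin_mat_def)
  moreover have "lin_mat \<phi> $$ (0, 0) = a" "lin_mat \<phi> $$ (1, 0) = b" "lin_mat \<phi> $$ (2, 0) = g1"
    "lin_mat \<phi> $$ (0, 1) = c" "lin_mat \<phi> $$ (1, 1) = d" "lin_mat \<phi> $$ (2, 1) = g2"
    "lin_mat \<phi> $$ (0, 2) = p" "lin_mat \<phi> $$ (1, 2) = q" "lin_mat \<phi> $$ (2, 2) = e"
    by (simp_all add: lin_mat_def assms numeral_2_eq_2 single_var_eq_xpow var_of_1)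
  ultimately show ?thesis
    by (simp add: char_poly_3 algebra_simps)
qed

lemma quadric_pair_cases:
  fixes x y e :: "'k::field_char_0"
  assumes "x * (x + (2 * y + e)) = 0" "y * (y + (2 * x - e)) = 0"
  shows "(x, y) \<in> {(0, 0), (0, e), (- e, 0), (e, - e)}"
proof (cases "x = 0")
  case True
  with assms(2) have "y = 0 \<or> y = e"
    by simp
  with True show ?thesis
    by auto
next
  case False
  with assms(1) have x: "x = - (2 * y + e)"
    by (simp add: add_eq_0_iff2)
  have "y = - (2 * x - e) \<Longrightarrow> y = - e"
    using x by Groebner_Basis.algebra
  with assms(2) have "y = 0 \<or> y = - e"
    by (auto simp: add_eq_0_iff2)
  with x show ?thesis
    by auto
qed

lemma bracket_block_cases:
  fixes a b c d e :: "'k::field_char_0"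
  assumes "c * (c + (2 * a + e)) = 0" and "a * (a + (2 * c - e)) = 0"
    and "d * (d + (2 * b - e)) = 0" and "b * (b + (2 * d + e)) = 0"
    and "a * d - b * c \<noteq> 0"
  shows "(a, b, c, d) \<in> {(e, 0, 0, e), (e, e, 0, -e), (-e, 0, e, e), (0, -e, -e, 0),
    (0, e, -e, -e), (-e, -e, e, 0)}"
proof -
  have "(c, a) \<in> {(0, 0), (0, e), (- e, 0), (e, - e)}"
    using assms(1,2) by (rule quadric_pair_cases)
  moreover have "(d, b) \<in> {(0, 0), (0, - e), (e, 0), (- e, e)}"
    using quadric_pair_cases[of d b "- e"] assms(3,4) by simp
  ultimately show ?thesis
    using assms(5) by (elim insertE emptyE) simp_all
qed

lemma reflection_block_of_char_poly:
  fixes a b c d e \<xi> :: "'k::field_char_0"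
  assumes block: "(a, b, c, d) \<in> {(e, 0, 0, e), (e, e, 0, -e), (-e, 0, e, e), (0, -e, -e, 0),
      (0, e, -e, -e), (-e, -e, e, 0)}"
    and det: "(a * d - b * c) * e = \<xi>" and tr: "a + d + e = 2 + \<xi>"
    and minors: "(a * d - b * c) + (a + d) * e = 1 + 2 * \<xi>" and "\<xi> \<noteq> 1"
  shows "e = 1 \<and> (a, b, c, d) \<in> {(1, 1, 0, -1), (-1, 0, 1, 1), (0, -1, -1, 0)}"
proof -
  from block consider
      (identity) "(a, b, c, d) = (e, 0, 0, e)"
    | (reflection) "(a, b, c, d) \<in> {(e, e, 0, -e), (-e, 0, e, e), (0, -e, -e, 0)}"
    | (rotation) "a * d - b * c = e * e" "a + d = - e"
    by auto
  then show ?thesis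
  proof cases
    case identity
    with tr minors have "3 * e = 2 + \<xi>" "3 * (e * e) = 1 + 2 * \<xi>"
      by (simp_all add: algebra_simps)
    then have "(e - 1) * (e - 1) = 0"
      by Groebner_Basis.algebra
    with \<open>3 * e = 2 + \<xi>\<close> \<open>\<xi> \<noteq> 1\<close> show ?thesis
      by simp
  next
    case reflection
    then have "a * d - b * c = - (e * e)" "a + d = 0"
      by auto
    with det tr minors have "e = 2 + \<xi>" "- (e * e) = 1 + 2 * \<xi>" "- (e * e) * e = \<xi>"
      by (simp_all only: add_0 mult_zero_left add_0_right)
    then have "(e - 1) * (e + 3) = 0" "e * e * e + e - 2 = 0"
      by Groebner_Basis.algebra+
    then have "e = 1"
      by (auto simp: add_eq_0_iff2)
    with reflection show ?thesis
      by auto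
  next
    case rotation
    with tr minors have "2 + \<xi> = 0" "1 + 2 * \<xi> = 0"
      by (simp_all add: algebra_simps)
    then have "(3 :: 'k) = 0"
      by Groebner_Basis.algebra
    then show ?thesis
      by simp
  qed
qed

lemma PAut_gr_mvar_eq_lin:
  assumes "\<phi> \<in> PAut_gr"
  obtains a b c where "\<phi> (mvar v) = lin a b c"
proof -
  have "homogeneous 1 (mvar v :: 'a mpoly)"
    by (cases v) (simp_all add: mvar_eq_lin homogeneous_lin)
  then have "homogeneous 1 (\<phi> (mvar v))"
    using assms by (simp add: PAut_gr_def)
  then show ?thesis
    using homogeneous_1_eq_lin that by blast
qed

lemma PAut_gr_images_no_x3:
  fixes \<phi> :: "'k::idom mpoly \<Rightarrow> 'k mpoly"
  assumes "\<phi> \<in> PAut_gr" "\<phi> (mvar X1) = lin a b g1" "\<phi> (mvar X2) = lin c d g2"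
    and det: "a * d * e - a * q * g2 - c * b * e + c * q * g1 + p * b * g2 - p * d * g1 \<noteq> 0"
  shows "g1 = 0" "g2 = 0"
proof -
  have "pbr (lin a b g1) (lin c d g2) = \<phi> (pbr (mvar X1) (mvar X2))"
    using assms by (simp add: PAut_gr_def)
  also have "\<dots> = quad 0 0 0 0 0 0"
    using assms(1) by (simp add: PAut_gr_def pbr_mvar quad_0 k_alg_hom_0)
  finally have comm: "g1 * c - a * g2 = 0" "b * g2 - g1 * d = 0"
    by (simp_all add: pbr_lin_lin)
  have "(a * d * e - a * q * g2 - c * b * e + c * q * g1 + p * b * g2 - p * d * g1) * g1
      = (p * g1 - a * e) * (b * g2 - g1 * d) - (b * e - q * g1) * (g1 * c - a * g2)"
    by (simp add: algebra_simps)
  also have "\<dots> = 0"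
    by (simp only: comm mult_zero_right diff_zero)
  finally show "g1 = 0"
    using det by simp
  then have "(a * d * e - a * q * g2 - c * b * e + c * q * g1 + p * b * g2 - p * d * g1) * g2
      = (q * g2 - d * e) * (g1 * c - a * g2) - (c * e - p * g2) * (b * g2 - g1 * d)"
    by (simp add: algebra_simps)
  also have "\<dots> = 0"
    by (simp only: comm mult_zero_right diff_zero)
  finally show "g2 = 0"
    using det by simp
qed

lemma PAut_gr_block_equations:
  fixes \<phi> :: "'k::idom mpoly \<Rightarrow> 'k mpoly"
  assumes "\<phi> \<in> PAut_gr"
    and "\<phi> (mvar X1) = lin a b 0" "\<phi> (mvar X2) = lin c d 0" "\<phi> (mvar X3) = lin p q e"
  shows "c * (c + (2 * a + e)) = 0" "a * (a + (2 * c - e)) = 0"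
    and "d * (d + (2 * b - e)) = 0" "b * (b + (2 * d + e)) = 0"
proof -
  have hom: "is_k_alg_hom \<phi>" and br: "\<And>f g. \<phi> (pbr f g) = pbr (\<phi> f) (\<phi> g)"
    using assms(1) by (simp_all add: PAut_gr_def)
  have "pbr (lin c d 0) (lin p q e) = 2 * lin a b 0 * lin c d 0 + lin c d 0 ^ 2"
    using br[of "mvar X2" "mvar X3"] by (simp add: assms(2-4) pbr_mvar k_alg_hom_simps[OF hom])
  then have c: "- (c * e) = 2 * (a * c) + c * c" and d: "d * e = 2 * (b * d) + d * d"
    by (simp_all add: pbr_lin_lin lin_mult_lin power2_eq_square)
  from c show "c * (c + (2 * a + e)) = 0"
    by Groebner_Basis.algebra
  from d show "d * (d + (2 * b - e)) = 0"
    by Groebner_Basis.algebra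
  have "pbr (lin p q e) (lin a b 0) = lin a b 0 ^ 2 + 2 * lin a b 0 * lin c d 0"
    using br[of "mvar X3" "mvar X1"] by (simp add: assms(2-4) pbr_mvar k_alg_hom_simps[OF hom])
  then have a: "e * a = a * a + 2 * (a * c)" and b: "- (e * b) = b * b + 2 * (b * d)"
    by (simp_all add: pbr_lin_lin lin_mult_lin power2_eq_square)
  from a show "a * (a + (2 * c - e)) = 0"
    by Groebner_Basis.algebra
  from b show "b * (b + (2 * d + e)) = 0"
    by Groebner_Basis.algebra
qed

text \<open>
  \<open>(a, b, c, d)\<close> stands for \<open>x1 \<mapsto> a x1 + b x2, x2 \<mapsto> c x1 + d x2\<close>; each of the three is a
  reflection interchanging two of the lines \<open>x1 = 0\<close>, \<open>x2 = 0\<close>, \<open>x1 + x2 = 0\<close>.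
\<close>

definition reflection_blocks :: "('k::comm_ring_1 \<times> 'k \<times> 'k \<times> 'k) set" where
  "reflection_blocks = {(1, 1, 0, -1), (-1, 0, 1, 1), (0, -1, -1, 0)}"

lemma poisson_reflection_cases:
  fixes r :: "'k::field_char_0 mpoly \<Rightarrow> 'k mpoly"
  assumes "poisson_reflection r"
  obtains a b c d p q where "(a, b, c, d) \<in> reflection_blocks"
    and "r (mvar X1) = lin a b 0" "r (mvar X2) = lin c d 0" "r (mvar X3) = lin p q 1"
proof -
  obtain \<xi> n where P: "r \<in> PAut_gr" and "\<xi> \<noteq> 1" "n > 0" "\<xi> ^ n = 1"
    and cp: "char_poly (lin_mat r) = [:-1, 1:] ^ 2 * [:-\<xi>, 1:]"
    using assms by (auto simp: poisson_reflection_def)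
  then have "\<xi> \<noteq> 0"
    by (auto simp: power_0_left)
  obtain a b g1 where r1: "r (mvar X1) = lin a b g1"
    using PAut_gr_mvar_eq_lin[OF P] by blast
  obtain c d g2 where r2: "r (mvar X2) = lin c d g2"
    using PAut_gr_mvar_eq_lin[OF P] by blast
  obtain p q e where r3: "r (mvar X3) = lin p q e"
    using PAut_gr_mvar_eq_lin[OF P] by blast
  have "([:-1, 1:] ^ 2 * [:-\<xi>, 1:] :: 'k poly) = [:-\<xi>, 1 + 2 * \<xi>, -2 - \<xi>, 1:]"
    by (simp add: power2_eq_square algebra_simps)
  with cp have det: "a * d * e - a * q * g2 - c * b * e + c * q * g1 + p * b * g2 - p * d * g1 = \<xi>"
    and minors: "a * d - c * b + a * e - p * g1 + d * e - q * g2 = 1 + 2 * \<xi>"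
    and tr: "a + d + e = 2 + \<xi>"
    by (simp_all add: char_poly_lin_mat[OF r1 r2 r3] algebra_simps)
  have "a * d * e - a * q * g2 - c * b * e + c * q * g1 + p * b * g2 - p * d * g1 \<noteq> 0"
    using det \<open>\<xi> \<noteq> 0\<close> by simp
  then have g1: "g1 = 0" and g2: "g2 = 0"
    by (rule PAut_gr_images_no_x3[OF P r1 r2])+
  have "(a * d - b * c) * e = \<xi>" "a * d - b * c + (a + d) * e = 1 + 2 * \<xi>"
    using det minors g1 g2 by (simp_all add: algebra_simps)
  moreover from this have "a * d - b * c \<noteq> 0"
    using \<open>\<xi> \<noteq> 0\<close> by auto
  ultimately have "e = 1 \<and> (a, b, c, d) \<in> reflection_blocks"
    using reflection_block_of_char_poly[OF bracket_block_cases[OF PAut_gr_block_equations[OF P]]]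
      r1 r2 r3 g1 g2 tr \<open>\<xi> \<noteq> 1\<close> by (simp add: reflection_blocks_def)
  then show ?thesis
    using that r1 r2 r3 g1 g2 by blast
qed

lemma reflection_coeff_x3:
  assumes "r \<in> PAut_gr"
    and "r (mvar X1) = lin a b 0" "r (mvar X2) = lin c d 0" "r (mvar X3) = lin p q 1"
  shows "mcoeff (r f) (xpow 0 0 1) = mcoeff f (xpow 0 0 1)"
proof -
  have hom: "is_k_alg_hom r"
    using assms(1) by (simp add: PAut_gr_def)
  have "mcoeff (r f) (xpow 0 0 1) = mcoeff (hcomp 1 (r f)) (xpow 0 0 1)"
    by (simp add: coeff_hcomp)
  also have "hcomp 1 (r f) = r (hcomp 1 f)"
    using assms(1) by (simp add: PAut_gr_hcomp)
  also have "mcoeff (r (hcomp 1 f)) (xpow 0 0 1) = mcoeff (hcomp 1 f) (xpow 0 0 1)"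
    by (subst (1 2) homogeneous_1_eq_lin[OF homogeneous_hcomp]) (simp add: k_alg_hom_lin[OF hom] assms(2-4))
  also have "\<dots> = mcoeff f (xpow 0 0 1)"
    by (simp add: coeff_hcomp)
  finally show ?thesis .
qed

lemma reflection_fixes_qform:
  assumes "is_k_alg_hom r" "(a, b, c, d) \<in> reflection_blocks"
    and "r (mvar X1) = lin a b 0" "r (mvar X2) = lin c d 0"
  shows "r qform = qform"
proof -
  have "r qform = lin a b 0 * lin a b 0 + lin a b 0 * lin c d 0 + lin c d 0 * lin c d 0"
    by (simp add: qform_def k_alg_hom_simps[OF assms(1)] assms(3,4))
  then show ?thesis
    using assms(2) by (auto simp: reflection_blocks_def lin_mult_lin qform_eq_quad)
qed

lemma reflection_fixed_lin:
  assumes "is_k_alg_hom r" "(a, b, c, d) \<in> reflection_blocks"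
    and "r (mvar X1) = lin a b 0" "r (mvar X2) = lin c d 0"
  obtains w1 w2 where "w1 \<noteq> 0 \<or> w2 \<noteq> 0"
    and "\<And>x y. r (lin x y 0) = lin x y 0 \<Longrightarrow> \<exists>s. x = s * w1 \<and> y = s * w2"
proof -
  have r: "r (lin x y 0) = lin (x * a + y * c) (x * b + y * d) 0" for x y
    by (simp add: k_alg_hom_lin[OF assms(1)] assms(3,4))
  from assms(2) consider "(a, b, c, d) = (1, 1, 0, -1)" | "(a, b, c, d) = (-1, 0, 1, 1)"
    | "(a, b, c, d) = (0, -1, -1, 0)"
    by (auto simp: reflection_blocks_def)
  then show ?thesis
  proof cases
    case 1
    then show ?thesis
      using that[of 2 1] by (simp add: r)
  next
    case 2
    then show ?thesis
      using that[of 1 2] by (simp add: r)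
  next
    case 3
    then show ?thesis
      using that[of 1 "-1"] by (simp add: r)
  qed
qed

section \<open>Invariants of groups generated by Poisson reflections\<close>

lemma gen_group_base: "s \<in> S \<Longrightarrow> s \<in> gen_group S"
  using gen_group.gen_mult[OF _ gen_group.gen_id] by fastforce

lemma gen_group_comp: "h \<in> gen_group S \<Longrightarrow> g \<in> gen_group S \<Longrightarrow> h \<circ> g \<in> gen_group S"
  by (induction h rule: gen_group.induct) (auto simp: comp_assoc intro: gen_group.intros)

lemma gen_group_empty: "gen_group {} = {id}"
  using gen_group.simps by blast

lemma gen_group_preserves:
  assumes "\<And>s. s \<in> S \<Longrightarrow> bij s \<and> (\<forall>x. h (s x) = h x)" "g \<in> gen_group S"
  shows "h (g x) = h x"
  using assms(2)
proof (induction arbitrary: x rule: gen_group.induct)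
  case (gen_inv s g)
  then have "h (inv_into UNIV s (g x)) = h (s (inv_into UNIV s (g x)))"
    using assms(1) by simp
  also have "\<dots> = h (g x)"
    using assms(1)[OF gen_inv.hyps(1)] by (simp add: bij_is_surj f_inv_into_f)
  finally show ?case
    using gen_inv.IH by simp
qed (use assms(1) in auto)

lemma invariants_gen_group:
  assumes "\<And>s. s \<in> S \<Longrightarrow> bij s"
  shows "invariants (gen_group S) = invariants S"
proof
  show "invariants S \<subseteq> invariants (gen_group S)"
  proof (clarsimp simp: invariants_def)
    fix f g
    assume "\<forall>s\<in>S. s f = f" "g \<in> gen_group S"
    then show "g f = f"
      using gen_group_preserves[where h = "\<lambda>y. y = f"] assms
      by (metis (mono_tags) bij_is_inj inj_eq)
  qed
qed (auto simp: invariants_def gen_group_base)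

definition orbit_sum :: "('k::comm_ring_1 mpoly \<Rightarrow> 'k mpoly) set \<Rightarrow> 'k mpoly \<Rightarrow> 'k mpoly" where
  "orbit_sum G f = (\<Sum>g\<in>G. g f)"

lemma orbit_sum_invariant:
  assumes "finite G" "\<And>g h. g \<in> G \<Longrightarrow> h \<in> G \<Longrightarrow> h \<circ> g \<in> G"
    and "\<And>g. g \<in> G \<Longrightarrow> is_k_alg_hom g \<and> inj g"
  shows "orbit_sum G f \<in> invariants G"
  unfolding invariants_def
proof clarify
  fix h
  assume "h \<in> G"
  then have inj: "inj_on ((\<circ>) h) G"
    using assms(3) by (auto intro!: inj_onI simp: fun_eq_iff inj_eq)
  moreover have "(\<circ>) h ` G \<subseteq> G"
    using assms(2) \<open>h \<in> G\<close> by blast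
  ultimately have "(\<circ>) h ` G = G"
    using assms(1) by (simp add: card_image card_subset_eq)
  then have "(\<Sum>g\<in>G. (h \<circ> g) f) = orbit_sum G f"
    using sum.reindex[OF inj, of "\<lambda>g. g f"] by (simp add: orbit_sum_def)
  then show "h (orbit_sum G f) = orbit_sum G f"
    using assms(3)[OF \<open>h \<in> G\<close>] by (simp add: orbit_sum_def k_alg_hom_sum)
qed

lemma invariants_diff:
  "(\<And>g. g \<in> G \<Longrightarrow> is_k_alg_hom g) \<Longrightarrow> x \<in> invariants G \<Longrightarrow> y \<in> invariants G \<Longrightarrow>
    x - y \<in> invariants G"
  by (auto simp: invariants_def k_alg_hom_diff)

lemma invariants_mconst_mult:
  "(\<And>g. g \<in> G \<Longrightarrow> is_k_alg_hom g) \<Longrightarrow> x \<in> invariants G \<Longrightarrow> mconst c * x \<in> invariants G"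
  by (auto simp: invariants_def k_alg_hom_mconst_mult)

lemma invariants_hcomp: "G \<subseteq> PAut_gr \<Longrightarrow> x \<in> invariants G \<Longrightarrow> hcomp d x \<in> invariants G"
  by (auto simp: invariants_def) (metis PAut_gr_hcomp subsetD)

lemma reflection_group_invariant_lin:
  fixes G :: "('k::field_char_0 mpoly \<Rightarrow> 'k mpoly) set"
  assumes "finite G" "G \<subseteq> PAut_gr" "\<forall>r\<in>R. poisson_reflection r" "G = gen_group R"
  obtains f1 f2 where "lin f1 f2 (of_nat (card G)) \<in> invariants G"
proof -
  define F where "F = orbit_sum G (mvar X3)"
  have "F \<in> invariants G"
    unfolding F_def using assms(1,2,4)
    by (intro orbit_sum_invariant) (auto simp: gen_group_comp PAut_gr_def bij_is_inj)
  have "homogeneous 1 F"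
    unfolding F_def orbit_sum_def using assms(2)
    by (intro homogeneous_sum) (auto simp: PAut_gr_def mvar_eq_lin homogeneous_lin)
  have "mcoeff (g (mvar X3)) (xpow 0 0 1) = 1" if "g \<in> G" for g
  proof -
    have "bij r \<and> (\<forall>f. mcoeff (r f) (xpow 0 0 1) = mcoeff f (xpow 0 0 1))" if "r \<in> R" for r
    proof -
      have refl: "poisson_reflection r"
        using assms(3) that by blast
      then have "r \<in> PAut_gr"
        by (simp add: poisson_reflection_def)
      moreover obtain a b c d p q where "r (mvar X1) = lin a b 0" "r (mvar X2) = lin c d 0"
        "r (mvar X3) = lin p q 1"
        by (rule poisson_reflection_cases[OF refl])
      ultimately show ?thesis
        by (simp add: PAut_gr_def reflection_coeff_x3)
    qed
    then show ?thesis
      using gen_group_preserves[of R "\<lambda>f. mcoeff f (xpow 0 0 1)" g "mvar X3"] \<open>g \<in> G\<close> assms(4)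
      by (simp add: mvar_eq_lin)
  qed
  then have "mcoeff F (xpow 0 0 1) = of_nat (card G)"
    by (simp add: F_def orbit_sum_def lookup_sum)
  then show ?thesis
    using that \<open>F \<in> invariants G\<close> homogeneous_1_eq_lin[OF \<open>homogeneous 1 F\<close>] by metis
qed

lemma invariant_hcomp_1_decomp:
  fixes G :: "('k::field mpoly \<Rightarrow> 'k mpoly) set"
  assumes "G \<subseteq> PAut_gr" "r0 \<in> G" "lin f1 f2 N \<in> invariants G" "N \<noteq> 0"
    and fixed: "\<And>x y. r0 (lin x y 0) = lin x y 0 \<Longrightarrow> \<exists>s. x = s * w1 \<and> y = s * w2"
    and "x \<in> invariants G"
  shows "\<exists>s t. hcomp 1 x = mconst s * lin f1 f2 N + mconst t * lin w1 w2 0"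
proof -
  have hom: "\<And>g. g \<in> G \<Longrightarrow> is_k_alg_hom g"
    using assms(1) by (auto simp: PAut_gr_def)
  obtain l1 l2 l3 where l: "hcomp 1 x = lin l1 l2 l3"
    using homogeneous_1_eq_lin[OF homogeneous_hcomp] by blast
  define s where "s = l3 / N"
  have "hcomp 1 x - mconst s * lin f1 f2 N \<in> invariants G"
    using assms(1,3,6) hom by (intro invariants_diff invariants_mconst_mult invariants_hcomp)
  then have "r0 (lin (l1 - s * f1) (l2 - s * f2) 0) = lin (l1 - s * f1) (l2 - s * f2) 0"
    using \<open>N \<noteq> 0\<close> \<open>r0 \<in> G\<close> by (simp add: l s_def invariants_def)
  then obtain t where "l1 - s * f1 = t * w1" "l2 - s * f2 = t * w2"
    using fixed by blast
  then have "hcomp 1 x = mconst s * lin f1 f2 N + mconst t * lin w1 w2 0"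
    using \<open>N \<noteq> 0\<close> by (simp add: l s_def algebra_simps)
  then show ?thesis
    by blast
qed

lemma reflection_group_degree_1_invariants:
  fixes G :: "('k::field_char_0 mpoly \<Rightarrow> 'k mpoly) set"
  assumes "G \<subseteq> PAut_gr" "\<forall>r\<in>R. poisson_reflection r" "G = gen_group R" "r0 \<in> R"
    and F: "lin f1 f2 N \<in> invariants G" and "N \<noteq> 0"
  obtains (plane) w1 w2 where "lin w1 w2 0 \<in> invariants G" "w1 \<noteq> 0 \<or> w2 \<noteq> 0"
      "\<And>x. x \<in> invariants G \<Longrightarrow> \<exists>s t. hcomp 1 x = mconst s * lin f1 f2 N + mconst t * lin w1 w2 0"
  | (line) "\<And>x. x \<in> invariants G \<Longrightarrow> \<exists>s. hcomp 1 x = mconst s * lin f1 f2 N"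
proof -
  have hom: "\<And>g. g \<in> G \<Longrightarrow> is_k_alg_hom g"
    using assms(1) by (auto simp: PAut_gr_def)
  have "r0 \<in> G"
    using assms(3,4) by (simp add: gen_group_base)
  have "poisson_reflection r0"
    using assms(2,4) by blast
  then obtain a b c d p q where r0: "(a, b, c, d) \<in> reflection_blocks"
    "r0 (mvar X1) = lin a b 0" "r0 (mvar X2) = lin c d 0" "r0 (mvar X3) = lin p q 1"
    by (rule poisson_reflection_cases)
  obtain w1 w2 where w: "w1 \<noteq> 0 \<or> w2 \<noteq> 0"
    and fixed: "\<And>x y. r0 (lin x y 0) = lin x y 0 \<Longrightarrow> \<exists>s. x = s * w1 \<and> y = s * w2"
    using reflection_fixed_lin[OF hom[OF \<open>r0 \<in> G\<close>] r0(1-3)] by blast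
  have decomp: "\<exists>s t. hcomp 1 x = mconst s * lin f1 f2 N + mconst t * lin w1 w2 0"
    if "x \<in> invariants G" for x
    using invariant_hcomp_1_decomp[OF assms(1) \<open>r0 \<in> G\<close> F \<open>N \<noteq> 0\<close> _ that] fixed by blast
  show ?thesis
  proof (cases "lin w1 w2 0 \<in> invariants G")
    case True
    then show ?thesis
      using plane w decomp by blast
  next
    case False
    have "\<exists>s. hcomp 1 x = mconst s * lin f1 f2 N" if x: "x \<in> invariants G" for x
    proof -
      obtain s t where st: "hcomp 1 x = mconst s * lin f1 f2 N + mconst t * lin w1 w2 0"
        using decomp[OF x] by blast
      have "mconst (1 / t) * (hcomp 1 x - mconst s * lin f1 f2 N) \<in> invariants G"
        using x F hom assms(1) by (intro invariants_diff invariants_mconst_mult invariants_hcomp)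
      then have "t = 0"
        using False by (cases "t = 0") (simp_all add: st)
      then show ?thesis
        using st by auto
    qed
    then show ?thesis
      using line by blast
  qed
qed

section \<open>Brackets of invariants\<close>

inductive_set sum_prods :: "'a::{comm_monoid_add, times} set \<Rightarrow> 'a set" for A where
  sum_prods_0: "0 \<in> sum_prods A"
| sum_prods_add: "a \<in> A \<Longrightarrow> b \<in> A \<Longrightarrow> s \<in> sum_prods A \<Longrightarrow> a * b + s \<in> sum_prods A"

lemma sum_prods_mono: "A \<subseteq> B \<Longrightarrow> sum_prods A \<subseteq> sum_prods B"
proof
  fix s
  assume "A \<subseteq> B" "s \<in> sum_prods A"
  from \<open>s \<in> sum_prods A\<close> show "s \<in> sum_prods B"
    by induction (use \<open>A \<subseteq> B\<close> in \<open>auto intro: sum_prods.intros\<close>)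
qed

lemma k_alg_hom_sum_prods:
  assumes "is_k_alg_hom \<phi>" "s \<in> sum_prods A"
  shows "\<phi> s \<in> sum_prods (\<phi> ` A)"
  using assms(2)
  by (induction rule: sum_prods.induct)
    (auto simp: k_alg_hom_0[OF assms(1)] k_alg_hom_add[OF assms(1)] k_alg_hom_mult[OF assms(1)]
      intro: sum_prods.intros)

lemma pbr_in_sum_prods:
  assumes "\<And>h. mvar X1 * h \<in> I" "\<And>h. mvar X2 * h \<in> I"
  shows "pbr f g \<in> sum_prods I"
proof -
  define D1 where "D1 = pdiff X2 f * pdiff X3 g - pdiff X3 f * pdiff X2 g"
  define D2 where "D2 = pdiff X3 f * pdiff X1 g - pdiff X1 f * pdiff X3 g"
  have "pbr f g = mvar X1 * (mvar X1 * D2) + (mvar X1 * (mvar X2 * (2 * (D1 + D2))) +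
      (mvar X2 * (mvar X2 * D1) + 0))"
    by (simp add: pbr_eq D1_def D2_def algebra_simps power2_eq_square)
  also have "\<dots> \<in> sum_prods I"
    by (intro sum_prods.intros assms[of 1, simplified] assms)
  finally show ?thesis .
qed

lemma hcomp_2_sum_prods:
  assumes "\<And>a. a \<in> A \<Longrightarrow> hcomp 0 a = 0" "s \<in> sum_prods A"
  shows "hcomp 2 s \<in> sum_prods (hcomp 1 ` A)"
  using assms(2)
proof (induction rule: sum_prods.induct)
  case (sum_prods_add a b s)
  have "hcomp 2 (a * b + s) = hcomp 1 a * hcomp 1 b + hcomp 2 s"
    using assms(1)[OF sum_prods_add.hyps(1)] assms(1)[OF sum_prods_add.hyps(2)]
    by (simp add: hcomp_add hcomp_mult numeral_2_eq_2 One_nat_def)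
  then show ?case
    using sum_prods_add by (simp add: sum_prods.sum_prods_add)
qed (simp add: sum_prods.sum_prods_0)

lemma hcomp_3_sum_prods:
  assumes "\<And>a. a \<in> A \<Longrightarrow> hcomp 0 a = 0 \<and> (\<exists>c. hcomp 1 a = mconst c * X)" "s \<in> sum_prods A"
  shows "\<exists>H. hcomp 3 s = X * H"
  using assms(2)
proof (induction rule: sum_prods.induct)
  case (sum_prods_add a b s)
  obtain c c' H where "hcomp 0 a = 0" "hcomp 0 b = 0" "hcomp 1 a = mconst c * X" "hcomp 1 b = mconst c' * X"
    "hcomp 3 s = X * H"
    using assms(1) sum_prods_add by metis
  then have "hcomp 3 (a * b + s) = X * (mconst c * hcomp 2 b + mconst c' * hcomp 2 a + H)"
    by (simp add: hcomp_add hcomp_mult numeral_3_eq_3 numeral_2_eq_2 One_nat_def algebra_simps)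
  then show ?case ..
next
  case sum_prods_0
  have "hcomp 3 0 = X * 0"
    by simp
  then show ?case ..
qed

lemma sum_prods_span_2:
  assumes "s \<in> sum_prods {mconst c * X + mconst d * Y | c d. True}"
  shows "\<exists>u v w. s = mconst u * (X * X) + mconst v * (X * Y) + mconst w * (Y * Y)"
  using assms
proof (induction rule: sum_prods.induct)
  case sum_prods_0
  show ?case
    by (rule exI[of _ 0], rule exI[of _ 0], rule exI[of _ 0]) simp
next
  case (sum_prods_add a b s)
  then obtain c d c' d' u v w where "a = mconst c * X + mconst d * Y" "b = mconst c' * X + mconst d' * Y"
    "s = mconst u * (X * X) + mconst v * (X * Y) + mconst w * (Y * Y)"
    by blast
  then have "a * b + s = mconst (c * c' + u) * (X * X) + mconst (c * d' + d * c' + v) * (X * Y)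
      + mconst (d * d' + w) * (Y * Y)"
    by (simp add: mconst_simps algebra_simps)
  then show ?case
    by blast
qed

lemma coeff_0_mult: "mcoeff (f * g) 0 = mcoeff f 0 * mcoeff g 0"
  using hcomp_0_mult[of f g] by (simp add: hcomp_0_eq_mconst flip: mconst_mult)

lemma coeff_0_pbr: "mcoeff (pbr f g) 0 = 0"
  using hcomp_0_pbr[of f g] by (simp add: hcomp_0_eq_mconst)

lemma bracket_quadrics_common_zero:
  fixes u v :: "'k::field_char_0"
  assumes "u * u + 2 * (u * v) = 0" "2 * (u * v) + v * v = 0"
  shows "u = 0" "v = 0"
proof -
  have "(u - v) * (u + v) = 0"
    using assms by Groebner_Basis.algebra
  then have "u = v \<or> u = - v"
    by (auto simp: add_eq_0_iff2)
  then show "u = 0" "v = 0"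
    using assms by auto
qed

lemma poisson_hom_hcomp_0_mvar:
  fixes \<psi> :: "'k::field_char_0 mpoly \<Rightarrow> 'k mpoly"
  assumes hom: "is_k_alg_hom \<psi>" and br: "\<And>f g. \<psi> (pbr f g) = pbr (\<psi> f) (\<psi> g)"
  shows "hcomp 0 (\<psi> (mvar X1)) = 0" "hcomp 0 (\<psi> (mvar X2)) = 0"
proof -
  define u where "u = mcoeff (\<psi> (mvar X1)) 0"
  define v where "v = mcoeff (\<psi> (mvar X2)) 0"
  have "mcoeff (\<psi> (pbr (mvar X3) (mvar X1))) 0 = 0" "mcoeff (\<psi> (pbr (mvar X2) (mvar X3))) 0 = 0"
    by (simp_all add: br coeff_0_pbr)
  then have "u * u + 2 * (u * v) = 0" "2 * (u * v) + v * v = 0"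
    by (simp_all add: pbr_mvar k_alg_hom_simps[OF hom] lookup_add coeff_0_mult power2_eq_square
        lookup_numeral mult.assoc u_def v_def)
  then have "u = 0" "v = 0"
    by (rule bracket_quadrics_common_zero)+
  then show "hcomp 0 (\<psi> (mvar X1)) = 0" "hcomp 0 (\<psi> (mvar X2)) = 0"
    by (simp_all add: hcomp_0_eq_mconst u_def v_def)
qed

lemma poisson_iso_pbr_in_sum_prods:
  fixes A :: "'k::field_char_0 mpoly set"
  assumes "poisson_iso_to_subalg A" "x \<in> A" "y \<in> A"
  shows "pbr x y \<in> sum_prods {a \<in> A. hcomp 0 a = 0}"
proof -
  obtain \<psi> where bij: "bij_betw \<psi> UNIV A" and hom: "is_k_alg_hom \<psi>"
    and br: "\<And>f g. \<psi> (pbr f g) = pbr (\<psi> f) (\<psi> g)"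
    using assms(1) by (auto simp: poisson_iso_to_subalg_def)
  obtain f g where "x = \<psi> f" "y = \<psi> g"
    using bij assms(2,3) by (metis bij_betw_imp_surj_on imageE)
  define I where "I = {h. hcomp 0 (\<psi> h) = 0}"
  have "\<And>h. mvar v * h \<in> I" if "v \<in> {X1, X2}" for v
    using that poisson_hom_hcomp_0_mvar[OF hom br] by (auto simp: I_def k_alg_hom_mult[OF hom] hcomp_0_mult)
  then have "pbr f g \<in> sum_prods I"
    by (intro pbr_in_sum_prods) auto
  then have "pbr x y \<in> sum_prods (\<psi> ` I)"
    using k_alg_hom_sum_prods[OF hom] by (simp add: br \<open>x = \<psi> f\<close> \<open>y = \<psi> g\<close> flip: br)
  moreover have "\<psi> ` I \<subseteq> {a \<in> A. hcomp 0 a = 0}"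
    using bij by (auto simp: I_def bij_betw_def)
  ultimately show ?thesis
    using sum_prods_mono by blast
qed

lemma pbr_lin_not_in_sum_prods_plane:
  fixes A :: "'k::field_char_0 mpoly set"
  assumes "N \<noteq> 0" "w1 \<noteq> 0 \<or> w2 \<noteq> 0"
    and span: "\<And>a. a \<in> A \<Longrightarrow> \<exists>s t. hcomp 1 a = mconst s * lin f1 f2 N + mconst t * lin w1 w2 0"
  shows "pbr (lin f1 f2 N) (lin w1 w2 0) \<notin> sum_prods {a \<in> A. hcomp 0 a = 0}"
proof
  define F where "F = lin f1 f2 N"
  define W where "W = lin w1 w2 0"
  assume "pbr (lin f1 f2 N) (lin w1 w2 0) \<in> sum_prods {a \<in> A. hcomp 0 a = 0}"
  then have "hcomp 2 (pbr F W) \<in> sum_prods (hcomp 1 ` {a \<in> A. hcomp 0 a = 0})"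
    by (intro hcomp_2_sum_prods) (auto simp: F_def W_def)
  also have "\<dots> \<subseteq> sum_prods {mconst s * F + mconst t * W | s t. True}"
    using span by (intro sum_prods_mono) (auto simp: F_def W_def)
  finally obtain u v t where "hcomp 2 (pbr F W) = mconst u * (F * F) + mconst v * (F * W) + mconst t * (W * W)"
    using sum_prods_span_2 by blast
  then have "pbr F W = mconst u * (F * F) + mconst v * (F * W) + mconst t * (W * W)"
    by (simp add: F_def W_def pbr_lin_lin hcomp_homogeneous[OF homogeneous_quad])
  note e = this[unfolded F_def W_def pbr_lin_lin lin_mult_lin mconst_mult_quad quad_add quad_eq_iff]
  from e have "u * (N * N) = 0"
    by simp
  then have "u = 0"
    using \<open>N \<noteq> 0\<close> by simp
  with e have "v = 0"
    using \<open>N \<noteq> 0\<close> assms(2) by auto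
  with e \<open>u = 0\<close> have "N * w1 = t * (w1 * w1)" "- (N * w2) = t * (w2 * w2)"
    "2 * (N * w1) - 2 * (N * w2) = t * (2 * (w1 * w2))"
    by simp_all
  then have "N * (w1 * (w1 - 2 * w2)) = 0" "N * (w2 * (2 * w1 - w2)) = 0"
    by Groebner_Basis.algebra+
  then have "w1 * (w1 - 2 * w2) = 0" "w2 * (2 * w1 - w2) = 0"
    using \<open>N \<noteq> 0\<close> by simp_all
  then show False
    using assms(2) by (auto simp: right_diff_distrib)
qed

lemma pbr_lin_qform_not_in_sum_prods_line:
  fixes A :: "'k::field_char_0 mpoly set"
  assumes "N \<noteq> 0" and line: "\<And>a. a \<in> A \<Longrightarrow> \<exists>s. hcomp 1 a = mconst s * lin f1 f2 N"
  shows "pbr (lin f1 f2 N) qform \<notin> sum_prods {a \<in> A. hcomp 0 a = 0}"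
proof
  assume "pbr (lin f1 f2 N) qform \<in> sum_prods {a \<in> A. hcomp 0 a = 0}"
  then obtain H where H: "hcomp 3 (pbr (lin f1 f2 N) qform) = lin f1 f2 N * H"
    using hcomp_3_sum_prods[of "{a \<in> A. hcomp 0 a = 0}" "lin f1 f2 N"] line by blast
  have "mcoeff (lin f1 f2 N * H) (xpow 0 0 3) = 0" "mcoeff (lin f1 f2 N * H) (xpow 1 0 2) = 0"
    "mcoeff (lin f1 f2 N * H) (xpow 2 0 1) = 0" "mcoeff (lin f1 f2 N * H) (xpow 3 0 0) = 2 * N"
    by (simp_all flip: H add: coeff_hcomp coeff_pbr_lin_qform)
  then show False
    using \<open>N \<noteq> 0\<close> by (simp add: coeff_lin_mult flip: One_nat_def)
qed

lemma reflection_group_invariant_qform: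
  fixes R :: "('k::field_char_0 mpoly \<Rightarrow> 'k mpoly) set"
  assumes "\<forall>r\<in>R. poisson_reflection r"
  shows "qform \<in> invariants (gen_group R)"
proof -
  have "r \<in> PAut_gr \<and> r qform = qform" if "r \<in> R" for r
  proof -
    have refl: "poisson_reflection r"
      using assms that by blast
    then have "r \<in> PAut_gr"
      by (simp add: poisson_reflection_def)
    moreover obtain a b c d p q where "(a, b, c, d) \<in> reflection_blocks"
      "r (mvar X1) = lin a b 0" "r (mvar X2) = lin c d 0"
      by (rule poisson_reflection_cases[OF refl])
    ultimately show ?thesis
      by (simp add: PAut_gr_def reflection_fixes_qform)
  qed
  then show ?thesis
    by (subst invariants_gen_group) (auto simp: invariants_def PAut_gr_def)
qed

theorem lemma3p4p2:
  fixes G :: "('k::field_char_0 mpoly \<Rightarrow> 'k mpoly) set"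
  assumes "alg_closed TYPE('k)"
    and "finite G"
    and "G \<subseteq> PAut_gr"
    and "\<exists>R. (\<forall>r\<in>R. poisson_reflection r) \<and> G = gen_group R"
    and "G \<noteq> {id}"
  shows "\<not> poisson_iso_to_subalg (invariants G)"
proof
  assume iso: "poisson_iso_to_subalg (invariants G)"
  obtain R where R: "\<forall>r\<in>R. poisson_reflection r" "G = gen_group R"
    using assms(4) by blast
  have "R \<noteq> {}"
    using assms(5) R(2) gen_group_empty by auto
  then obtain r0 where "r0 \<in> R"
    by blast
  obtain f1 f2 where F: "lin f1 f2 (of_nat (card G)) \<in> invariants G"
    using reflection_group_invariant_lin[OF assms(2,3) R] by blast
  have N: "of_nat (card G) \<noteq> (0 :: 'k)"
    using assms(2) R(2) gen_group.gen_id[of R] by (auto simp: card_eq_0_iff)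
  note pbr_invariants = poisson_iso_pbr_in_sum_prods[OF iso]
  show False
  proof (cases rule: reflection_group_degree_1_invariants[OF assms(3) R \<open>r0 \<in> R\<close> F N,
        case_names plane line])
    case (plane w1 w2)
    then show False
      using pbr_invariants[OF F plane(1)] pbr_lin_not_in_sum_prods_plane[OF N plane(2,3)] by simp
  next
    case line
    have "qform \<in> invariants G"
      using reflection_group_invariant_qform[OF R(1)] R(2) by simp
    then show False
      using pbr_invariants[OF F \<open>qform \<in> invariants G\<close>]
        pbr_lin_qform_not_in_sum_prods_line[where A = "invariants G", OF N line] by simp
  qed
qed

end
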